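(* Let $D$ be a database and $\Omega$ a partition of $D$ into $|\Omega|$ pairwise disjoint sub-databases, and let $\mathcal F=\{A_1,\ldots,A_Q\}$ be a set of $Q$ queries, each a subset of $\Omega$. Fix $\varepsilon>0$. The benchmark algorithm answers each query $A\in\mathcal F$ independently by $\hat N_1(A)=N(A)+\zeta_A$ with $\zeta_A\sim\mathrm{Lap}(1/\varepsilon)$, consuming total privacy budget $Q\varepsilon$. The sigma-counting algorithm uses $\varepsilon'=\varepsilon Q/|\Omega|$ (so that its total privacy budget $|\Omega|\varepsilon'$ equals $Q\varepsilon$): independently for each $\omega\in\Omega$ it sets $\hat N_2(\omega)=\max(N(\omega)+\zeta_\omega,0)$ with $\zeta_\omega\sim\mathrm{Lap}(1/\varepsilon')$, and answers $A\in\mathcal F$ by $\hat N_2(A)=\sum_{\omega\in A}\hat N_2(\omega)$. If $Q>|\Omega|^{3/2}$, then the utility of the sigma-counting algorithm on $\mathcal F$ is strictly larger than that of the benchmark algorithm on $\mathcal F$.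
   Context: $N(A)$ denotes the true number of rows in the sub-database $\bigcup_{\omega\in A}\omega$. $\mathrm{Lap}(\lambda)$ is the Laplace distribution with density $(2\lambda)^{-1}e^{-|x|/\lambda}$. The privacy budget of an algorithm is its total differential-privacy parameter computed by sequential composition (a Laplace mechanism with noise $\mathrm{Lap}(1/\varepsilon)$ on a count has parameter $\varepsilon$, and parameters add over mechanisms). The utility of an algorithm producing responses $\hat N(A)$ on a finite set of queries $\mathcal F$ is $\mathcal U=\frac{1}{\mathrm{card}(\mathcal F)}\sum_{A\in\mathcal F}\frac{2}{\mathrm{Var}(\hat N(A)\mid N(A))}$. *)

theory Defs
  imports "HOL-Probability.Probability" "HOL-Library.Disjoint_Sets"
begin

definition N :: "'r set set \<Rightarrow> nat" where
  "N A = card (\<Union>A)"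

definition laplace_density :: "real \<Rightarrow> real \<Rightarrow> real" where
  "laplace_density b x = exp (- \<bar>x\<bar> / b) / (2 * b)"

definition laplace :: "real \<Rightarrow> real measure" where
  "laplace b = density lborel (\<lambda>x. ennreal (laplace_density b x))"

definition var :: "'a measure \<Rightarrow> ('a \<Rightarrow> real) \<Rightarrow> real" where
  "var M X = (\<integral>x. (X x - (\<integral>y. X y \<partial>M))\<^sup>2 \<partial>M)"

text \<open>Utility, valued in ennreal so that 2/0 = \<infinity> (zero-variance responses).\<close>
definition utility :: "'a measure \<Rightarrow> 'q set \<Rightarrow> ('q \<Rightarrow> 'a \<Rightarrow> real) \<Rightarrow> ennreal" where
  "utility M F Nhat = (\<Sum>A\<in>F. ennreal 2 / ennreal (var M (Nhat A))) / of_nat (card F)"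

definition benchmark_noise :: "real \<Rightarrow> 'r set set set \<Rightarrow> ('r set set \<Rightarrow> real) measure" where
  "benchmark_noise eps F = PiM F (\<lambda>_. laplace (1 / eps))"

definition benchmark_answer :: "'r set set \<Rightarrow> ('r set set \<Rightarrow> real) \<Rightarrow> real" where
  "benchmark_answer A z = real (N A) + z A"

definition sigma_noise :: "real \<Rightarrow> 'r set set \<Rightarrow> ('r set \<Rightarrow> real) measure" where
  "sigma_noise eps' \<Omega> = PiM \<Omega> (\<lambda>_. laplace (1 / eps'))"

definition sigma_answer :: "'r set set \<Rightarrow> ('r set \<Rightarrow> real) \<Rightarrow> real" where
  "sigma_answer A z = (\<Sum>\<omega>\<in>A. max (real (N {\<omega>}) + z \<omega>) 0)"

end

theory Submission
  imports Defs
begin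

text \<open>
  A benchmark answer carries one Laplace noise of scale 1/\<epsilon>, whose variance is 2/\<epsilon>^2, so the
  benchmark utility is \<epsilon>^2. A sigma-counting answer is a sum of at most |\<Omega>| independent
  clipped noisy counts max (N(\<omega>) + \<zeta>) 0. Since N(\<omega>) \<ge> 0, clipping moves the value no farther
  from N(\<omega>) than \<zeta> does, so each clipped count has variance at most E \<zeta>^2 = 2/\<epsilon>'^2. Hence
  every sigma-counting answer has variance at most |\<Omega>| \<cdot> 2/\<epsilon>'^2 = 2|\<Omega>|^3/(\<epsilon>^2 Q^2),
  which is smaller than 2/\<epsilon>^2 exactly when Q^2 > |\<Omega>|^3.
\<close>

lemma nn_integral_even_function:
  fixes f :: "real \<Rightarrow> ennreal"
  assumes [measurable]: "f \<in> borel_measurable borel" and even: "\<And>x. f (- x) = f x"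
  shows "(\<integral>\<^sup>+x. f x \<partial>lborel) = 2 * (\<integral>\<^sup>+x. f x * indicator {0..} x \<partial>lborel)"
proof -
  have "(\<integral>\<^sup>+x. f x \<partial>lborel)
      = (\<integral>\<^sup>+x. f x * indicator {0..} x \<partial>lborel) + (\<integral>\<^sup>+x. f x * indicator {..<0} x \<partial>lborel)"
    by (subst nn_integral_add[symmetric]) (auto intro!: nn_integral_cong split: split_indicator)
  also have "(\<integral>\<^sup>+x. f x * indicator {..<0} x \<partial>lborel) = (\<integral>\<^sup>+x. f (- x) * indicator {..<0} (- x) \<partial>lborel)"
    using nn_integral_real_affine[where c="-1" and t=0 and f="\<lambda>x. f x * indicator {..<0} x"] by simp
  also have "\<dots> = (\<integral>\<^sup>+x. f x * indicator {0..} x \<partial>lborel)"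
    using AE_lborel_singleton[of 0]
    by (intro nn_integral_cong_AE) (auto simp: even split: split_indicator elim!: eventually_mono)
  finally show ?thesis by (simp add: mult_2)
qed

lemma borel_measurable_laplace_density [measurable]: "laplace_density b \<in> borel_measurable borel"
  unfolding laplace_density_def by measurable

lemma laplace_density_nonneg: "b > 0 \<Longrightarrow> 0 \<le> laplace_density b x"
  unfolding laplace_density_def by simp

lemma laplace_density_minus [simp]: "laplace_density b (- x) = laplace_density b x"
  unfolding laplace_density_def by simp

lemma nn_integral_laplace_abs_power:
  assumes b: "b > 0"
  shows "(\<integral>\<^sup>+x. ennreal (laplace_density b x * \<bar>x\<bar> ^ k) \<partial>lborel) = ennreal (fact k * b ^ k)"
proof -
  have "ennreal (laplace_density b x * \<bar>x\<bar> ^ k) * indicator {0..} x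
      = ennreal (erlang_density 0 (1/b) x * x ^ k) / 2" for x
    using b by (cases "x < 0")
      (auto simp: laplace_density_def erlang_density_def ennreal_divide_numeral field_simps)
  then have "(\<integral>\<^sup>+x. ennreal (laplace_density b x * \<bar>x\<bar> ^ k) * indicator {0..} x \<partial>lborel)
      = (\<integral>\<^sup>+x. ennreal (erlang_density 0 (1/b) x * x ^ k) \<partial>lborel) / 2"
    by (simp add: nn_integral_divide)
  also have "\<dots> = ennreal (fact k * b ^ k) / 2"
    using b by (simp add: nn_integral_erlang_ith_moment power_one_over)
  finally show ?thesis
    by (subst nn_integral_even_function) (simp_all add: ennreal_times_divide mult.commute[of 2] mult_divide_eq_ennreal)
qed

lemma sets_laplace [simp, measurable_cong]: "sets (laplace b) = sets borel"
  unfolding laplace_def by simp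

lemma prob_space_laplace:
  assumes "b > 0"
  shows "prob_space (laplace b)"
proof
  show "emeasure (laplace b) (space (laplace b)) = 1"
    using nn_integral_laplace_abs_power[OF assms, of 0]
    unfolding laplace_def by (simp add: emeasure_density)
qed

lemma product_prob_space_laplace: "b > 0 \<Longrightarrow> product_prob_space (\<lambda>_. laplace b)"
  by (simp add: product_prob_spaceI prob_space_laplace)

lemma has_bochner_integral_laplace:
  assumes "b > 0" and [measurable]: "f \<in> borel_measurable borel"
    and "has_bochner_integral lborel (\<lambda>x. laplace_density b x * f x) I"
  shows "has_bochner_integral (laplace b) f I"
  unfolding laplace_def using assms
  by (intro has_bochner_integral_density) (auto simp: laplace_density_nonneg)

lemma has_bochner_integral_laplace_square:
  assumes b: "b > 0"
  shows "has_bochner_integral (laplace b) (\<lambda>x. x\<^sup>2) (2 * b\<^sup>2)"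
proof (intro has_bochner_integral_laplace has_bochner_integral_nn_integral)
  show "(\<integral>\<^sup>+x. ennreal (laplace_density b x * x\<^sup>2) \<partial>lborel) = ennreal (2 * b\<^sup>2)"
    using nn_integral_laplace_abs_power[OF b, of 2] by simp
qed (use b in \<open>auto simp: laplace_density_nonneg\<close>)

lemma has_bochner_integral_laplace_id:
  assumes b: "b > 0"
  shows "has_bochner_integral (laplace b) (\<lambda>x. x) 0"
proof (intro has_bochner_integral_laplace)
  have "(\<integral>\<^sup>+x. ennreal (norm (laplace_density b x * x)) \<partial>lborel) = ennreal b"
    using nn_integral_laplace_abs_power[OF b, of 1] b
    by (simp add: abs_mult laplace_density_nonneg)
  then have int: "integrable lborel (\<lambda>x. laplace_density b x * x)"
    by (simp add: integrable_iff_bounded)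
  \<comment> \<open>the integrand is odd\<close>
  have "(\<integral>x. laplace_density b x * x \<partial>lborel) = - (\<integral>x. laplace_density b x * x \<partial>lborel)"
    using lborel_integral_real_affine[of "-1" "\<lambda>x. laplace_density b x * x" 0] by simp
  with int show "has_bochner_integral lborel (\<lambda>x. laplace_density b x * x) 0"
    by (simp add: has_bochner_integral_iff)
qed (use b in auto)

lemma integrable_laplace_linear_growth:
  fixes f :: "real \<Rightarrow> real"
  assumes b: "b > 0" and [measurable]: "f \<in> borel_measurable borel"
    and growth: "\<And>t. \<bar>f t\<bar> \<le> a + \<bar>t\<bar>"
  shows "integrable (laplace b) f" "integrable (laplace b) (\<lambda>t. (f t)\<^sup>2)"
proof -
  interpret prob_space "laplace b" by (rule prob_space_laplace[OF b])
  have id: "integrable (laplace b) (\<lambda>t. t)" and sq: "integrable (laplace b) (\<lambda>t. t\<^sup>2)"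
    using has_bochner_integral_laplace_id[OF b] has_bochner_integral_laplace_square[OF b]
    by (simp_all add: has_bochner_integral_iff)
  show "integrable (laplace b) f"
  proof (rule Bochner_Integration.integrable_bound)
    show "integrable (laplace b) (\<lambda>t. a + \<bar>t\<bar>)"
      using id by simp
    show "AE t in laplace b. norm (f t) \<le> norm (a + \<bar>t\<bar>)"
      using order_trans[OF growth abs_ge_self] by simp
  qed measurable
  show "integrable (laplace b) (\<lambda>t. (f t)\<^sup>2)"
  proof (rule Bochner_Integration.integrable_bound)
    show "integrable (laplace b) (\<lambda>t. a\<^sup>2 + 2 * a * \<bar>t\<bar> + t\<^sup>2)"
      using id sq by simp
    have "(f t)\<^sup>2 \<le> a\<^sup>2 + 2 * a * \<bar>t\<bar> + t\<^sup>2" for t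
      using power_mono[OF growth abs_ge_zero, of t 2] by (simp add: power2_sum)
    then show "AE t in laplace b. norm ((f t)\<^sup>2) \<le> norm (a\<^sup>2 + 2 * a * \<bar>t\<bar> + t\<^sup>2)"
      by (simp add: order_trans[OF _ abs_ge_self])
  qed measurable
qed

lemma var_nonneg: "0 \<le> var M X"
  unfolding var_def by (rule Bochner_Integration.integral_nonneg) simp

lemma (in prob_space) var_le_expectation_square_diff:
  fixes X :: "'a \<Rightarrow> real"
  assumes "integrable M X" "integrable M (\<lambda>x. (X x)\<^sup>2)"
  shows "var M X \<le> expectation (\<lambda>x. (X x - c)\<^sup>2)"
proof -
  have "expectation (\<lambda>x. (X x - c)\<^sup>2) = expectation (\<lambda>x. (X x)\<^sup>2) - 2 * c * expectation X + c\<^sup>2"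
    using assms by (simp add: power2_diff prob_space)
  moreover have "var M X = expectation (\<lambda>x. (X x)\<^sup>2) - (expectation X)\<^sup>2"
    unfolding var_def using assms by (rule variance_eq)
  moreover have "0 \<le> (expectation X - c)\<^sup>2" by simp
  ultimately show ?thesis unfolding power2_diff by (simp add: algebra_simps)
qed

lemma (in product_prob_space) integral_PiM_component:
  fixes f :: "'a \<Rightarrow> real"
  assumes "i \<in> I" and [measurable]: "f \<in> borel_measurable (M i)"
  shows "integrable (PiM I M) (\<lambda>z. f (z i)) \<longleftrightarrow> integrable (M i) f"
    "(\<integral>z. f (z i) \<partial>PiM I M) = integral\<^sup>L (M i) f"
proof -
  have comp: "(\<lambda>z. z i) \<in> measurable (PiM I M) (M i)"
    using assms(1) by measurable
  show "integrable (PiM I M) (\<lambda>z. f (z i)) \<longleftrightarrow> integrable (M i) f"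
    "(\<integral>z. f (z i) \<partial>PiM I M) = integral\<^sup>L (M i) f"
    using integrable_distr_eq[OF comp assms(2)] integral_distr[OF comp assms(2)]
    unfolding PiM_component[OF assms(1)] by simp_all
qed

lemma (in product_prob_space) var_PiM_component:
  assumes "i \<in> I" "f \<in> borel_measurable (M i)"
  shows "var (PiM I M) (\<lambda>z. f (z i)) = var (M i) f"
proof -
  have sq: "(\<lambda>t. (f t - c)\<^sup>2) \<in> borel_measurable (M i)" for c
    using assms(2) by measurable
  show ?thesis
    unfolding var_def integral_PiM_component(2)[OF assms] integral_PiM_component(2)[OF assms(1) sq] ..
qed

lemma (in product_prob_space) integral_PiM_two_components:
  fixes f g :: "'a \<Rightarrow> real"
  assumes "finite I" "i \<in> I" "j \<in> I" "i \<noteq> j"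
    and "integrable (M i) f" "integrable (M j) g"
  shows "integrable (PiM I M) (\<lambda>z. f (z i) * g (z j))"
    "(\<integral>z. f (z i) * g (z j) \<partial>PiM I M) = integral\<^sup>L (M i) f * integral\<^sup>L (M j) g"
proof -
  have prod_two: "(\<Prod>k\<in>I. \<phi> k) = \<phi> i * \<phi> j" if "\<And>k. k \<notin> {i, j} \<Longrightarrow> \<phi> k = 1" for \<phi> :: "'i \<Rightarrow> real"
    using assms(1-4) that by (subst prod.mono_neutral_right[of I "{i, j}"]) auto
  define h where "h k = (if k = i then f else if k = j then g else (\<lambda>_. 1))" for k
  have h: "integrable (M k) (h k)" for k
    using assms(5,6) by (simp add: h_def)
  have "(\<lambda>z. f (z i) * g (z j)) = (\<lambda>z. \<Prod>k\<in>I. h k (z k))"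
    using assms(4) by (subst prod_two) (auto simp: h_def)
  moreover have "(\<Prod>k\<in>I. integral\<^sup>L (M k) (h k)) = integral\<^sup>L (M i) f * integral\<^sup>L (M j) g"
    using assms(4) by (subst prod_two) (auto simp: h_def M.prob_space)
  ultimately show "integrable (PiM I M) (\<lambda>z. f (z i) * g (z j))"
    "(\<integral>z. f (z i) * g (z j) \<partial>PiM I M) = integral\<^sup>L (M i) f * integral\<^sup>L (M j) g"
    using product_integrable_prod[OF assms(1) h] product_integral_prod[OF assms(1) h] by simp_all
qed

lemma (in product_prob_space) var_sum_components:
  fixes f :: "'i \<Rightarrow> 'a \<Rightarrow> real"
  assumes I: "finite I" "A \<subseteq> I"
    and f: "\<And>i. i \<in> A \<Longrightarrow> integrable (M i) (f i)"
    and f2: "\<And>i. i \<in> A \<Longrightarrow> integrable (M i) (\<lambda>t. (f i t)\<^sup>2)"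
  shows "var (PiM I M) (\<lambda>z. \<Sum>i\<in>A. f i (z i)) = (\<Sum>i\<in>A. var (M i) (f i))"
proof -
  have A: "finite A" "\<And>i. i \<in> A \<Longrightarrow> i \<in> I"
    using I finite_subset by auto
  define g where "g i = (\<lambda>t. f i t - integral\<^sup>L (M i) (f i))" for i
  have g: "integrable (M i) (g i)" if "i \<in> A" for i
    using f[OF that] by (simp add: g_def)
  have g_mean: "integral\<^sup>L (M i) (g i) = 0" if "i \<in> A" for i
    using f[OF that] by (simp add: g_def M.prob_space)
  have g2: "integrable (M i) (\<lambda>t. (g i t)\<^sup>2)" if "i \<in> A" for i
    using f[OF that] f2[OF that] by (simp add: g_def power2_diff)
  have mean: "(\<integral>z. (\<Sum>i\<in>A. f i (z i)) \<partial>PiM I M) = (\<Sum>i\<in>A. integral\<^sup>L (M i) (f i))"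
    using A f by (simp add: integral_PiM_component borel_measurable_integrable)
  have cross: "integrable (PiM I M) (\<lambda>z. g i (z i) * g j (z j)) \<and>
      (\<integral>z. g i (z i) * g j (z j) \<partial>PiM I M) = (if i = j then var (M i) (f i) else 0)"
    if "i \<in> A" "j \<in> A" for i j
  proof (cases "i = j")
    case True
    have "var (M i) (f i) = integral\<^sup>L (M i) (\<lambda>t. (g i t)\<^sup>2)"
      by (simp add: var_def g_def)
    with True show ?thesis
      using integral_PiM_component[OF A(2) borel_measurable_integrable, OF that(1) g2] g2 that
      by (simp add: power2_eq_square)
  next
    case False
    then show ?thesis
      using integral_PiM_two_components[OF I(1) A(2) A(2) False g g] g_mean that by simp
  qed
  have "var (PiM I M) (\<lambda>z. \<Sum>i\<in>A. f i (z i)) = (\<integral>z. (\<Sum>i\<in>A. g i (z i))\<^sup>2 \<partial>PiM I M)"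
    unfolding var_def mean by (simp add: g_def sum_subtractf)
  also have "\<dots> = (\<integral>z. (\<Sum>i\<in>A. \<Sum>j\<in>A. g i (z i) * g j (z j)) \<partial>PiM I M)"
    by (simp add: power2_eq_square sum_product)
  also have "\<dots> = (\<Sum>i\<in>A. \<Sum>j\<in>A. \<integral>z. g i (z i) * g j (z j) \<partial>PiM I M)"
    using cross by simp
  also have "\<dots> = (\<Sum>i\<in>A. var (M i) (f i))"
    using cross A(1) by simp
  finally show ?thesis .
qed

lemma var_laplace_shift:
  assumes b: "b > 0"
  shows "var (laplace b) (\<lambda>t. c + t) = 2 * b\<^sup>2"
proof -
  interpret prob_space "laplace b" by (rule prob_space_laplace[OF b])
  have "expectation (\<lambda>t. c + t) = c"
    using has_bochner_integral_laplace_id[OF b] by (simp add: has_bochner_integral_iff prob_space)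
  then show ?thesis
    using has_bochner_integral_laplace_square[OF b] by (simp add: var_def has_bochner_integral_iff)
qed

lemma var_laplace_clipped_le:
  assumes b: "b > 0" and n: "n \<ge> 0"
  shows "var (laplace b) (\<lambda>t. max (n + t) 0) \<le> 2 * b\<^sup>2"
proof -
  interpret prob_space "laplace b" by (rule prob_space_laplace[OF b])
  have clip_growth: "\<bar>max (n + t) 0\<bar> \<le> n + \<bar>t\<bar>" for t
    using n by auto
  have shifted_growth: "\<bar>max (n + t) 0 - n\<bar> \<le> 0 + \<bar>t\<bar>" for t
    using n by auto
  have "var (laplace b) (\<lambda>t. max (n + t) 0) \<le> expectation (\<lambda>t. (max (n + t) 0 - n)\<^sup>2)"
    using integrable_laplace_linear_growth[OF b _ clip_growth]
    by (intro var_le_expectation_square_diff) auto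
  also have "\<dots> \<le> expectation (\<lambda>t. t\<^sup>2)"
  proof (rule integral_mono)
    show "integrable (laplace b) (\<lambda>t. (max (n + t) 0 - n)\<^sup>2)"
      using integrable_laplace_linear_growth[OF b _ shifted_growth] by simp
    show "integrable (laplace b) (\<lambda>t. t\<^sup>2)"
      using has_bochner_integral_laplace_square[OF b] by (simp add: has_bochner_integral_iff)
    show "(max (n + t) 0 - n)\<^sup>2 \<le> t\<^sup>2" for t
      using power_mono[OF shifted_growth abs_ge_zero, of t 2] by simp
  qed
  also have "\<dots> = 2 * b\<^sup>2"
    using has_bochner_integral_laplace_square[OF b] by (simp add: has_bochner_integral_iff)
  finally show ?thesis .
qed

lemma var_benchmark_answer:
  assumes "\<epsilon> > 0" "A \<in> F"
  shows "var (benchmark_noise \<epsilon> F) (benchmark_answer A) = 2 / \<epsilon>\<^sup>2"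
proof -
  interpret product_prob_space "\<lambda>_. laplace (1 / \<epsilon>)" F
    using assms(1) by (simp add: product_prob_space_laplace)
  have "var (benchmark_noise \<epsilon> F) (benchmark_answer A) = var (laplace (1 / \<epsilon>)) (\<lambda>t. real (N A) + t)"
    unfolding benchmark_noise_def benchmark_answer_def
    using var_PiM_component[OF assms(2), of "\<lambda>t. real (N A) + t"] by simp
  then show ?thesis
    using assms(1) by (simp add: var_laplace_shift power_one_over)
qed

lemma var_sigma_answer_le:
  assumes "\<epsilon>' > 0" "finite \<Omega>" "A \<subseteq> \<Omega>"
  shows "var (sigma_noise \<epsilon>' \<Omega>) (sigma_answer A) \<le> real (card A) * (2 / \<epsilon>'\<^sup>2)"
proof -
  interpret product_prob_space "\<lambda>_. laplace (1 / \<epsilon>')" \<Omega>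
    using assms(1) by (simp add: product_prob_space_laplace)
  have b: "1 / \<epsilon>' > 0"
    using assms(1) by simp
  have growth: "\<bar>max (real (N {\<omega>}) + t) 0\<bar> \<le> real (N {\<omega>}) + \<bar>t\<bar>" if "\<omega> \<in> A" for \<omega> t
    by auto
  have "var (sigma_noise \<epsilon>' \<Omega>) (sigma_answer A)
      = (\<Sum>\<omega>\<in>A. var (laplace (1 / \<epsilon>')) (\<lambda>t. max (real (N {\<omega>}) + t) 0))"
    unfolding sigma_noise_def sigma_answer_def
    using assms integrable_laplace_linear_growth[OF b _ growth]
    by (intro var_sum_components) auto
  also have "\<dots> \<le> (\<Sum>\<omega>\<in>A. 2 * (1 / \<epsilon>')\<^sup>2)"
    using b by (intro sum_mono var_laplace_clipped_le) auto
  finally show ?thesis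
    by (simp add: power_one_over)
qed

lemma var_sigma_answer_budget_split_le:
  assumes "finite \<Omega>" "A \<subseteq> \<Omega>" "\<epsilon> > 0" "c > 0"
  shows "var (sigma_noise (\<epsilon> * c / real (card \<Omega>)) \<Omega>) (sigma_answer A)
    \<le> real (card \<Omega>) * (2 / (\<epsilon> * c / real (card \<Omega>))\<^sup>2)"
proof (cases "\<Omega> = {}")
  case True
  \<comment> \<open>the budget split divides by zero, but then the answer is the constant 0\<close>
  with assms(2) show ?thesis
    by (simp add: var_def sigma_answer_def)
next
  case False
  with assms have "\<epsilon> * c / real (card \<Omega>) > 0"
    by (simp add: card_gt_0_iff)
  with assms show ?thesis
    using card_mono[OF assms(1,2)]
    by (intro order_trans[OF var_sigma_answer_le] mult_right_mono) auto
qed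

lemma divide_ennreal_antimono:
  assumes "0 \<le> w" "w \<le> v"
  shows "ennreal c / ennreal v \<le> ennreal c / ennreal w"
proof (cases "w = 0")
  case False
  with assms show ?thesis
    by (cases "c \<le> 0") (simp_all add: divide_ennreal divide_left_mono ennreal_leI ennreal_neg)
qed (simp add: ennreal_eq_0_iff)

lemma divide_ennreal_strict_antimono:
  assumes "0 \<le> w" "w < v" "0 < c"
  shows "ennreal c / ennreal v < ennreal c / ennreal w"
proof (cases "w = 0")
  case True
  with assms show ?thesis by (simp add: divide_ennreal)
next
  case False
  with assms show ?thesis
    by (simp add: divide_ennreal divide_strict_left_mono ennreal_lessI)
qed

lemma sum_const_divide_card_ennreal:
  assumes "finite F" "F \<noteq> {}"
  shows "(\<Sum>A\<in>F. c) / of_nat (card F) = (c :: ennreal)"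
  using assms by (simp add: mult.commute mult_divide_eq_ennreal)

lemma utility_le_of_var_ge:
  assumes "finite F" "F \<noteq> {}" "0 \<le> v" "\<And>A. A \<in> F \<Longrightarrow> v \<le> var M (Nhat A)"
  shows "utility M F Nhat \<le> ennreal 2 / ennreal v"
proof -
  have "utility M F Nhat \<le> (\<Sum>A\<in>F. ennreal 2 / ennreal v) / of_nat (card F)"
    unfolding utility_def using assms(3,4)
    by (intro divide_right_mono_ennreal sum_mono divide_ennreal_antimono)
  also have "\<dots> = ennreal 2 / ennreal v"
    using assms(1,2) by (rule sum_const_divide_card_ennreal)
  finally show ?thesis .
qed

lemma utility_ge_of_var_le:
  assumes "finite F" "F \<noteq> {}" "\<And>A. A \<in> F \<Longrightarrow> var M (Nhat A) \<le> v"
  shows "ennreal 2 / ennreal v \<le> utility M F Nhat"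
proof -
  have "ennreal 2 / ennreal v = (\<Sum>A\<in>F. ennreal 2 / ennreal v) / of_nat (card F)"
    using assms(1,2) by (rule sum_const_divide_card_ennreal[symmetric])
  also have "\<dots> \<le> utility M F Nhat"
    unfolding utility_def using assms(3)
    by (intro divide_right_mono_ennreal sum_mono divide_ennreal_antimono var_nonneg)
  finally show ?thesis .
qed

lemma cube_less_square_of_powr_three_halves_less:
  fixes K Q :: real
  assumes "0 \<le> K" "K powr (3/2) < Q"
  shows "K ^ 3 < Q ^ 2"
proof -
  have "K ^ 3 = (K powr (3/2)) ^ 2"
    using assms(1) by (cases "K = 0") (simp_all add: powr_power)
  also have "\<dots> < Q ^ 2"
    using assms(2) by (intro power_strict_mono) auto
  finally show ?thesis .
qed

lemma sigma_variance_bound_less_benchmark: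
  fixes \<epsilon> K Q :: real
  assumes "\<epsilon> > 0" "0 \<le> K" "K powr (3/2) < Q"
  shows "K * (2 / (\<epsilon> * Q / K)\<^sup>2) < 2 / \<epsilon>\<^sup>2"
proof (cases "K = 0")
  case False
  have "K ^ 3 < Q ^ 2"
    using assms(2,3) by (rule cube_less_square_of_powr_three_halves_less)
  moreover have "Q > 0"
    using assms(2,3) powr_ge_zero[of K "3/2"] by linarith
  ultimately show ?thesis
    using assms(1) False by (simp add: field_simps power2_eq_square power3_eq_cube)
qed (use assms(1) in simp)

theorem theorem2:
  fixes D :: "'r set" and \<Omega> :: "'r set set" and F :: "'r set set set" and \<epsilon> :: real
  assumes "finite D"
    and "partition_on D \<Omega>"
    and "F \<subseteq> Pow \<Omega>"
    and "\<epsilon> > 0"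
    and "real (card F) > real (card \<Omega>) powr (3/2)"
  shows "utility (sigma_noise (\<epsilon> * real (card F) / real (card \<Omega>)) \<Omega>) F sigma_answer
         > utility (benchmark_noise \<epsilon> F) F benchmark_answer"
proof -
  let ?\<epsilon>' = "\<epsilon> * real (card F) / real (card \<Omega>)"
  have "finite \<Omega>"
    using assms(1,2) by (rule finite_elements)
  have "card F > 0"
    using assms(5) powr_ge_zero[of "real (card \<Omega>)" "3/2"] by linarith
  then have F: "finite F" "F \<noteq> {}"
    by (simp_all add: card_gt_0_iff)
  have "utility (benchmark_noise \<epsilon> F) F benchmark_answer \<le> ennreal 2 / ennreal (2 / \<epsilon>\<^sup>2)"
    using F assms(4) by (intro utility_le_of_var_ge) (simp_all add: var_benchmark_answer)
  also have "\<dots> < ennreal 2 / ennreal (real (card \<Omega>) * (2 / ?\<epsilon>'\<^sup>2))"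
    using assms(4,5) by (intro divide_ennreal_strict_antimono sigma_variance_bound_less_benchmark) auto
  also have "\<dots> \<le> utility (sigma_noise ?\<epsilon>' \<Omega>) F sigma_answer"
    using F assms(3,4) \<open>finite \<Omega>\<close> \<open>card F > 0\<close>
    by (intro utility_ge_of_var_le var_sigma_answer_budget_split_le) auto
  finally show ?thesis .
qed

end
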